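(* Let $G=(V,E)$ be a finite simple graph with $|V(G)|=n$ and let $k$ be a positive integer. Then $\gamma_{gr}^{Z,k}(G)\geq n-F_k(G)$.
   Context: For a vertex $v$, $N(v)$ is its open neighborhood and $N[v]=N(v)\cup\{v\}$. A sequence $S=(v_1,\ldots,v_m)$ of distinct vertices is a $k$-$Z$-sequence if for each $i\in[m]$ there is a vertex $u_i\in N(v_i)$ such that the number of indices $j<i$ with $u_i\in N[v_j]$ is less than $k$; $\gamma_{gr}^{Z,k}(G)$ is the maximum length of a $k$-$Z$-sequence. $k$-forcing: initially a set $B$ of vertices is colored blue and the rest white; at each step, if a blue vertex has at most $k$ white neighbors (and at least one), all its white neighbors are colored blue. $B$ is a $k$-forcing set if repeated application eventually colors all vertices blue. $F_k(G)$ is the minimum size of a $k$-forcing set of $G$. *)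

theory Defs
  imports Main
begin

definition simple_graph :: "'a set \<Rightarrow> ('a \<Rightarrow> 'a \<Rightarrow> bool) \<Rightarrow> bool" where
  "simple_graph V E \<longleftrightarrow> finite V \<and> (\<forall>u v. E u v \<longrightarrow> u \<in> V \<and> v \<in> V)
     \<and> (\<forall>u v. E u v \<longrightarrow> E v u) \<and> (\<forall>v. \<not> E v v)"

definition open_nbhd :: "'a set \<Rightarrow> ('a \<Rightarrow> 'a \<Rightarrow> bool) \<Rightarrow> 'a \<Rightarrow> 'a set" where
  "open_nbhd V E v = {u \<in> V. E v u}"

definition closed_nbhd :: "'a set \<Rightarrow> ('a \<Rightarrow> 'a \<Rightarrow> bool) \<Rightarrow> 'a \<Rightarrow> 'a set" where
  "closed_nbhd V E v = insert v (open_nbhd V E v)"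

definition kZ_sequence :: "'a set \<Rightarrow> ('a \<Rightarrow> 'a \<Rightarrow> bool) \<Rightarrow> nat \<Rightarrow> 'a list \<Rightarrow> bool" where
  "kZ_sequence V E k S \<longleftrightarrow> distinct S \<and> set S \<subseteq> V \<and>
     (\<forall>i < length S. \<exists>u \<in> open_nbhd V E (S ! i).
        card {j. j < i \<and> u \<in> closed_nbhd V E (S ! j)} < k)"

definition gamma_grZ :: "'a set \<Rightarrow> ('a \<Rightarrow> 'a \<Rightarrow> bool) \<Rightarrow> nat \<Rightarrow> nat" where
  "gamma_grZ V E k = Max {length S | S. kZ_sequence V E k S}"

definition kforce_step :: "'a set \<Rightarrow> ('a \<Rightarrow> 'a \<Rightarrow> bool) \<Rightarrow> nat \<Rightarrow> 'a set \<Rightarrow> 'a set \<Rightarrow> bool" where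
  "kforce_step V E k B B' \<longleftrightarrow> (\<exists>v \<in> B. 0 < card (open_nbhd V E v - B)
       \<and> card (open_nbhd V E v - B) \<le> k \<and> B' = B \<union> open_nbhd V E v)"

inductive kforce_reach :: "'a set \<Rightarrow> ('a \<Rightarrow> 'a \<Rightarrow> bool) \<Rightarrow> nat \<Rightarrow> 'a set \<Rightarrow> 'a set \<Rightarrow> bool"
  for V E k where
  refl: "kforce_reach V E k B B"
| step: "kforce_reach V E k B C \<Longrightarrow> kforce_step V E k C D \<Longrightarrow> kforce_reach V E k B D"

definition kforcing_set :: "'a set \<Rightarrow> ('a \<Rightarrow> 'a \<Rightarrow> bool) \<Rightarrow> nat \<Rightarrow> 'a set \<Rightarrow> bool" where
  "kforcing_set V E k B \<longleftrightarrow> B \<subseteq> V \<and> kforce_reach V E k B V"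

definition forcing_number :: "'a set \<Rightarrow> ('a \<Rightarrow> 'a \<Rightarrow> bool) \<Rightarrow> nat \<Rightarrow> nat" where
  "forcing_number V E k = Min {card B | B. kforcing_set V E k B}"

end

theory Submission
  imports Defs
begin

text \<open>Reverse a k-forcing process that colours V from a k-forcing set B: list the vertices of
  V - B so that later forcing steps come first, the vertices of one step in any order.
  A vertex w forced by v has v as its neighbour, and N[v] was already blue at that step, so
  v lies in no closed neighbourhood of a vertex forced later; among the vertices listed before
  w it can only hit the fewer than k that were forced together with w. The result is a
  k-Z-sequence of length |V| - |B|.\<close>

definition Z_witness :: "'a set \<Rightarrow> ('a \<Rightarrow> 'a \<Rightarrow> bool) \<Rightarrow> nat \<Rightarrow> 'a list \<Rightarrow> nat \<Rightarrow> 'a \<Rightarrow> bool"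
  where "Z_witness V E k S i u \<longleftrightarrow>
    u \<in> open_nbhd V E (S ! i) \<and> card {j. j < i \<and> u \<in> closed_nbhd V E (S ! j)} < k"

definition kZ_witnessed_within :: "'a set \<Rightarrow> ('a \<Rightarrow> 'a \<Rightarrow> bool) \<Rightarrow> nat \<Rightarrow> 'a set \<Rightarrow> 'a list \<Rightarrow> bool"
  where "kZ_witnessed_within V E k C S \<longleftrightarrow>
    (\<forall>i < length S. \<exists>u. Z_witness V E k S i u \<and> closed_nbhd V E u \<subseteq> C)"

lemma kZ_sequenceI:
  assumes "kZ_witnessed_within V E k V S" and "distinct S" and "set S \<subseteq> V"
  shows "kZ_sequence V E k S"
  using assms unfolding kZ_sequence_def kZ_witnessed_within_def Z_witness_def by blast

lemma simple_graph_finite: "simple_graph V E \<Longrightarrow> finite V"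
  unfolding simple_graph_def by blast

lemma open_nbhd_subset: "open_nbhd V E v \<subseteq> V"
  unfolding open_nbhd_def by auto

lemma open_nbhd_sym:
  assumes "simple_graph V E"
  shows "u \<in> open_nbhd V E w \<longleftrightarrow> w \<in> open_nbhd V E u"
  using assms unfolding simple_graph_def open_nbhd_def by blast

lemma closed_nbhd_sym:
  assumes "simple_graph V E"
  shows "u \<in> closed_nbhd V E w \<longleftrightarrow> w \<in> closed_nbhd V E u"
  using open_nbhd_sym[OF assms] unfolding closed_nbhd_def by blast

lemma card_indices_less: "card {j. j < i \<and> P j} \<le> i"
  using card_mono[of "{..<i}" "{j. j < i \<and> P j}"] by auto

lemma card_indices_append_left:
  assumes "\<forall>x \<in> set xs. \<not> P x"
  shows "card {j. j < length xs + i \<and> P ((xs @ ys) ! j)} = card {j. j < i \<and> P (ys ! j)}"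
proof -
  have "{j. j < length xs + i \<and> P ((xs @ ys) ! j)} = (+) (length xs) ` {j. j < i \<and> P (ys ! j)}"
  proof (intro set_eqI iffI)
    fix j assume j: "j \<in> {j. j < length xs + i \<and> P ((xs @ ys) ! j)}"
    then have "\<not> j < length xs" using assms by (auto simp: nth_append)
    with j show "j \<in> (+) (length xs) ` {j. j < i \<and> P (ys ! j)}"
      by (auto simp: nth_append image_iff intro!: exI[of _ "j - length xs"])
  qed (auto simp: nth_append)
  then show ?thesis by (simp add: card_image)
qed

text \<open>Vertices outside C cannot disturb the old witnesses, whose closed neighbourhoods lie in C.\<close>
lemma kZ_witnessed_within_prepend:
  assumes sg: "simple_graph V E" and ws: "set ws \<inter> C = {}"
    and S: "kZ_witnessed_within V E k C S" and CD: "C \<subseteq> D"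
    and new: "\<forall>i < length ws. \<exists>u. Z_witness V E k (ws @ S) i u \<and> closed_nbhd V E u \<subseteq> D"
  shows "kZ_witnessed_within V E k D (ws @ S)"
  unfolding kZ_witnessed_within_def
proof (intro allI impI)
  fix i assume i: "i < length (ws @ S)"
  show "\<exists>u. Z_witness V E k (ws @ S) i u \<and> closed_nbhd V E u \<subseteq> D"
  proof (cases "i < length ws")
    case False
    then obtain i' where i': "i = length ws + i'" "i' < length S"
      using i by (intro that[of "i - length ws"]) auto
    with S obtain u where u: "Z_witness V E k S i' u" and uC: "closed_nbhd V E u \<subseteq> C"
      unfolding kZ_witnessed_within_def by blast
    have "\<forall>w \<in> set ws. u \<notin> closed_nbhd V E w"
      using ws uC closed_nbhd_sym[OF sg] by blast
    then have "card {j. j < i \<and> u \<in> closed_nbhd V E ((ws @ S) ! j)}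
        = card {j. j < i' \<and> u \<in> closed_nbhd V E (S ! j)}"
      unfolding i'(1) by (rule card_indices_append_left)
    moreover have "(ws @ S) ! i = S ! i'"
      unfolding i'(1) by (rule nth_append_length_plus)
    ultimately show ?thesis
      using u uC CD unfolding Z_witness_def by (intro exI[of _ u]) auto
  qed (use new in blast)
qed

text \<open>The forcing vertex v witnesses each of the at most k vertices it forces.\<close>
lemma kZ_witnessed_within_forced:
  assumes sg: "simple_graph V E" and step: "kforce_step V E k C D"
    and ws: "set ws = D - C" "distinct ws" and S: "kZ_witnessed_within V E k C S"
  shows "kZ_witnessed_within V E k D (ws @ S)"
proof -
  from step obtain v where v: "v \<in> C" "card (open_nbhd V E v - C) \<le> k"
      and D: "D = C \<union> open_nbhd V E v"
    unfolding kforce_step_def by blast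
  have vD: "closed_nbhd V E v \<subseteq> D"
    using v D unfolding closed_nbhd_def by blast
  have ws_nbhd: "set ws = open_nbhd V E v - C"
    using ws D by blast
  have "length ws \<le> k"
    using ws_nbhd v(2) distinct_card[OF ws(2)] by simp
  have "Z_witness V E k (ws @ S) i v" if i: "i < length ws" for i
  proof -
    have "(ws @ S) ! i \<in> open_nbhd V E v"
      using i ws_nbhd nth_mem[of i ws] by (auto simp: nth_append)
    then have "v \<in> open_nbhd V E ((ws @ S) ! i)"
      using open_nbhd_sym[OF sg] by blast
    moreover have "card {j. j < i \<and> v \<in> closed_nbhd V E ((ws @ S) ! j)} < k"
      using card_indices_less[of i "\<lambda>j. v \<in> closed_nbhd V E ((ws @ S) ! j)"] i
        \<open>length ws \<le> k\<close> by linarith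
    ultimately show ?thesis unfolding Z_witness_def by blast
  qed
  then have "\<forall>i < length ws. \<exists>u. Z_witness V E k (ws @ S) i u \<and> closed_nbhd V E u \<subseteq> D"
    using vD by blast
  moreover have "set ws \<inter> C = {}" "C \<subseteq> D"
    using ws(1) D by auto
  ultimately show ?thesis
    using kZ_witnessed_within_prepend[OF sg _ S] by blast
qed

lemma kforce_reach_kZ_witnessed:
  assumes sg: "simple_graph V E"
  shows "kforce_reach V E k B C \<Longrightarrow>
    \<exists>S. distinct S \<and> set S = C - B \<and> B \<subseteq> C \<and> kZ_witnessed_within V E k C S"
proof (induction rule: kforce_reach.induct)
  case refl
  show ?case
    by (intro exI[of _ "[]"]) (simp add: kZ_witnessed_within_def)
next
  case (step B C D)
  then obtain S where S: "distinct S" "set S = C - B" "B \<subseteq> C" "kZ_witnessed_within V E k C S"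
    by blast
  from step.hyps(2) obtain v where D: "D = C \<union> open_nbhd V E v"
    unfolding kforce_step_def by blast
  have "C \<subseteq> D"
    using D by blast
  have "D - C \<subseteq> V"
    using D open_nbhd_subset[of V E v] by blast
  then have "finite (D - C)"
    by (rule finite_subset) (rule simple_graph_finite[OF sg])
  then obtain ws where ws: "set ws = D - C" "distinct ws"
    using finite_distinct_list by blast
  show ?case
  proof (intro exI[of _ "ws @ S"] conjI)
    show "distinct (ws @ S)" "set (ws @ S) = D - B" "B \<subseteq> D"
      using ws S \<open>C \<subseteq> D\<close> by auto
    show "kZ_witnessed_within V E k D (ws @ S)"
      by (rule kZ_witnessed_within_forced[OF sg step.hyps(2) ws S(4)])
  qed
qed

lemma kforcing_set_kZ_sequence:
  assumes sg: "simple_graph V E" and B: "kforcing_set V E k B"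
  shows "\<exists>S. kZ_sequence V E k S \<and> length S = card V - card B"
proof -
  have "B \<subseteq> V" "kforce_reach V E k B V"
    using B unfolding kforcing_set_def by auto
  then obtain S where S: "distinct S" "set S = V - B" "kZ_witnessed_within V E k V S"
    using kforce_reach_kZ_witnessed[OF sg] by blast
  have "kZ_sequence V E k S"
    using S by (intro kZ_sequenceI) auto
  moreover have "length S = card V - card B"
    using S \<open>B \<subseteq> V\<close> simple_graph_finite[OF sg]
    by (metis card_Diff_subset distinct_card finite_subset)
  ultimately show ?thesis by blast
qed

lemma forcing_number_attained:
  assumes "simple_graph V E"
  shows "\<exists>B. kforcing_set V E k B \<and> forcing_number V E k = card B"
proof -
  have "kforcing_set V E k V"
    unfolding kforcing_set_def by (auto intro: kforce_reach.refl)
  moreover have "{card B | B. kforcing_set V E k B} \<subseteq> {..card V}"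
    using card_mono[OF simple_graph_finite[OF assms]] unfolding kforcing_set_def by auto
  then have "finite {card B | B. kforcing_set V E k B}"
    using finite_subset by blast
  ultimately have "forcing_number V E k \<in> {card B | B. kforcing_set V E k B}"
    unfolding forcing_number_def by (intro Min_in) auto
  then show ?thesis by blast
qed

lemma kZ_sequence_length_le_gamma_grZ:
  assumes "simple_graph V E" and "kZ_sequence V E k S"
  shows "length S \<le> gamma_grZ V E k"
proof -
  have "{length S | S. kZ_sequence V E k S} \<subseteq> {..card V}"
    using card_mono[OF simple_graph_finite[OF assms(1)]]
    unfolding kZ_sequence_def by (auto simp: distinct_card[symmetric])
  then have "finite {length S | S. kZ_sequence V E k S}"
    using finite_subset by blast
  then show ?thesis
    unfolding gamma_grZ_def using assms(2) by (intro Max_ge) auto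
qed

theorem mainTheorem4:
  fixes V :: "'a set" and E :: "'a \<Rightarrow> 'a \<Rightarrow> bool" and k :: nat
  assumes "simple_graph V E" and "k \<ge> 1"
  shows "int (gamma_grZ V E k) \<ge> int (card V) - int (forcing_number V E k)"
proof -
  obtain B where B: "kforcing_set V E k B" "forcing_number V E k = card B"
    using forcing_number_attained[OF assms(1)] by blast
  then obtain S where "kZ_sequence V E k S" "length S = card V - card B"
    using kforcing_set_kZ_sequence[OF assms(1)] by blast
  then have "card V - forcing_number V E k \<le> gamma_grZ V E k"
    using B(2) kZ_sequence_length_le_gamma_grZ[OF assms(1)] by metis
  then show ?thesis by simp
qed

end
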